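(* Let $\mathcal{N}=(Q,\Sigma,\Delta,q_0,F)$ be a history-deterministic one-counter net. A strategy $\sigma$ of Eve in the letter game on $\mathcal{N}$ is winning for Eve if and only if every step $(p,k)\xrightarrow{a,d}(p',k')$ that $\sigma$ takes is a good transition.
   Context: A one-counter net (OCN) is $\mathcal{N}=(Q,\Sigma,\Delta,q_0,F)$ with $Q$ finite, $\Sigma$ finite, $q_0\in Q$, $F\subseteq Q$, $\Delta\subseteq Q\times\Sigma\times\{-1,0,1\}\times Q$; configurations $(q,n)\in Q\times\mathbb{N}$, step $(q,n)\xrightarrow{a,d}(p,n+d)$ if $(q,a,d,p)\in\Delta$ and $n+d\ge0$; runs start at $(q_0,0)$ and are accepting if the last state is in $F$; $\mathcal{L}(\mathcal{N})$ is the set of words with an accepting run. Letter game: positions $(c,w)$, start $((q_0,0),\varepsilon)$; each round Adam picks $a\in\Sigma$, Eve picks a step $c\xrightarrow{a,d}c'$; if Eve has none and $wa$ is a prefix of a word of $\mathcal{L}(\mathcal{N})$ she loses; if $wa\in\mathcal{L}(\mathcal{N})$ but the state of $c'$ is not in $F$, Adam wins; otherwise continue from $(c',wa)$; Eve wins infinite plays. $\mathcal{N}$ is history-deterministic if Eve wins the letter game. The game $G_1$ on $\mathcal{N}$ from a position $(c^E,c^A)$ (Eve's token, Adam's token): each round Adam picks $a\in\Sigma$; Eve picks a step $c^E\xrightarrow{a,d}c^E_{+}$; Adam picks a step $c^A\xrightarrow{a,d'}c^A_{+}$. If Adam cannot move his token, he loses. If Eve cannot move while Adam can move and extend his run to an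 accepting run, Eve loses. If both move and the state of $c^A_+$ is in $F$ but that of $c^E_+$ is not, Eve loses. Otherwise continue; Eve wins infinite plays. A transition $\delta=(p,a,d,p')\in\Delta$ is good at $(p,k)$ (equivalently, the step $(p,k)\xrightarrow{a,d}(p',k+d)$ is good) if Eve wins $G_1$ from $((p,k),(p,k))$ and choosing this step is a winning move for Eve there when Adam chooses the letter $a$. *)

theory Defs
  imports Main
begin

text \<open>States and letters are finite types ('q::finite, 'a::finite),
  so Q = UNIV and Sigma = UNIV.\<close>

type_synonym ('q,'a) trans = "'q \<times> 'a \<times> int \<times> 'q"
type_synonym 'q conf = "'q \<times> nat"

definition ocn :: "('q::finite,'a::finite) trans set \<Rightarrow> bool" where
  "ocn Delta \<longleftrightarrow> (\<forall>(p,a,d,p')\<in>Delta. d \<in> {-1,0,1})"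

definition applicable :: "('q,'a) trans set \<Rightarrow> 'q conf \<Rightarrow> 'a \<Rightarrow> ('q,'a) trans \<Rightarrow> bool" where
  "applicable Delta c a t \<longleftrightarrow> (case t of (p,b,d,p') \<Rightarrow>
      t \<in> Delta \<and> b = a \<and> p = fst c \<and> int (snd c) + d \<ge> 0)"

definition target :: "'q conf \<Rightarrow> ('q,'a) trans \<Rightarrow> 'q conf" where
  "target c t = (case t of (p,b,d,p') \<Rightarrow> (p', nat (int (snd c) + d)))"

definition step :: "('q,'a) trans set \<Rightarrow> 'q conf \<Rightarrow> 'a \<Rightarrow> 'q conf \<Rightarrow> bool" where
  "step Delta c a c' \<longleftrightarrow> (\<exists>t. applicable Delta c a t \<and> c' = target c t)"

inductive reach :: "('q,'a) trans set \<Rightarrow> 'q conf \<Rightarrow> 'a list \<Rightarrow> 'q conf \<Rightarrow> bool"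
  for Delta where
  reach_Nil: "reach Delta c [] c"
| reach_Cons: "step Delta c a c' \<Longrightarrow> reach Delta c' w c'' \<Longrightarrow> reach Delta c (a # w) c''"

definition lang :: "('q,'a) trans set \<Rightarrow> 'q \<Rightarrow> 'q set \<Rightarrow> 'a list set" where
  "lang Delta q0 F = {w. \<exists>c. reach Delta (q0, 0) w c \<and> fst c \<in> F}"

definition can_accept :: "('q,'a) trans set \<Rightarrow> 'q set \<Rightarrow> 'q conf \<Rightarrow> bool" where
  "can_accept Delta F c \<longleftrightarrow> (\<exists>w c'. reach Delta c w c' \<and> fst c' \<in> F)"

text \<open>An Eve strategy in the letter game maps the word w read so far and Adam's
  new letter a to the transition she takes. lpos gives Eve's configuration after
  the word (None once the play has stopped because Eve had no move).\<close>

type_synonym ('q,'a) lstrat = "'a list \<Rightarrow> 'a \<Rightarrow> ('q,'a) trans"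

fun lpos_rev :: "('q,'a) trans set \<Rightarrow> 'q \<Rightarrow> ('q,'a) lstrat \<Rightarrow> 'a list \<Rightarrow> 'q conf option" where
  "lpos_rev Delta q0 \<sigma> [] = Some (q0, 0)"
| "lpos_rev Delta q0 \<sigma> (a # rw) =
     (case lpos_rev Delta q0 \<sigma> rw of
        None \<Rightarrow> None
      | Some c \<Rightarrow> (if applicable Delta c a (\<sigma> (rev rw) a)
                   then Some (target c (\<sigma> (rev rw) a)) else None))"

definition letter_pos :: "('q,'a) trans set \<Rightarrow> 'q \<Rightarrow> ('q,'a) lstrat \<Rightarrow> 'a list \<Rightarrow> 'q conf option" where
  "letter_pos Delta q0 \<sigma> w = lpos_rev Delta q0 \<sigma> (rev w)"

definition letter_strategy :: "('q,'a) trans set \<Rightarrow> 'q \<Rightarrow> ('q,'a) lstrat \<Rightarrow> bool" where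
  "letter_strategy Delta q0 \<sigma> \<longleftrightarrow>
     (\<forall>w a c. letter_pos Delta q0 \<sigma> w = Some c \<longrightarrow> (\<exists>c'. step Delta c a c') \<longrightarrow>
        applicable Delta c a (\<sigma> w a))"

definition letter_winning :: "('q,'a) trans set \<Rightarrow> 'q \<Rightarrow> 'q set \<Rightarrow> ('q,'a) lstrat \<Rightarrow> bool" where
  "letter_winning Delta q0 F \<sigma> \<longleftrightarrow>
     (\<forall>w a c. letter_pos Delta q0 \<sigma> w = Some c \<longrightarrow>
        (if \<exists>c'. step Delta c a c'
         then applicable Delta c a (\<sigma> w a) \<and>
              (w @ [a] \<in> lang Delta q0 F \<longrightarrow> fst (target c (\<sigma> w a)) \<in> F)
         else \<not> (\<exists>v. (w @ [a]) @ v \<in> lang Delta q0 F)))"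

definition history_deterministic :: "('q,'a) trans set \<Rightarrow> 'q \<Rightarrow> 'q set \<Rightarrow> bool" where
  "history_deterministic Delta q0 F \<longleftrightarrow> (\<exists>\<sigma>. letter_winning Delta q0 F \<sigma>)"

text \<open>An Eve strategy in G1 maps the history of completed rounds (Adam's letter and
  Adam's chosen transition for his token) and Adam's new letter to her transition.\<close>

type_synonym ('q,'a) gstrat = "('a \<times> ('q,'a) trans) list \<Rightarrow> 'a \<Rightarrow> ('q,'a) trans"

fun gpos_rev :: "('q,'a) trans set \<Rightarrow> ('q,'a) gstrat \<Rightarrow> 'q conf \<times> 'q conf
    \<Rightarrow> ('a \<times> ('q,'a) trans) list \<Rightarrow> ('q conf \<times> 'q conf) option" where
  "gpos_rev Delta \<tau> s [] = Some s"
| "gpos_rev Delta \<tau> s ((a, t) # rh) =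
     (case gpos_rev Delta \<tau> s rh of
        None \<Rightarrow> None
      | Some (e, x) \<Rightarrow>
          (if applicable Delta e a (\<tau> (rev rh) a) \<and> applicable Delta x a t
           then Some (target e (\<tau> (rev rh) a), target x t) else None))"

definition g1_pos :: "('q,'a) trans set \<Rightarrow> ('q,'a) gstrat \<Rightarrow> 'q conf \<times> 'q conf
    \<Rightarrow> ('a \<times> ('q,'a) trans) list \<Rightarrow> ('q conf \<times> 'q conf) option" where
  "g1_pos Delta \<tau> s h = gpos_rev Delta \<tau> s (rev h)"

text \<open>tau is winning for Eve in G1 from s = (Eve's token, Adam's token).\<close>
definition g1_winning :: "('q,'a) trans set \<Rightarrow> 'q set \<Rightarrow> ('q,'a) gstrat \<Rightarrow> 'q conf \<times> 'q conf \<Rightarrow> bool" where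
  "g1_winning Delta F \<tau> s \<longleftrightarrow>
     (\<forall>h a e x. g1_pos Delta \<tau> s h = Some (e, x) \<longrightarrow>
        (if \<exists>e'. step Delta e a e'
         then applicable Delta e a (\<tau> h a) \<and>
              (\<forall>x'. step Delta x a x' \<longrightarrow> fst x' \<in> F \<longrightarrow> fst (target e (\<tau> h a)) \<in> F)
         else (\<forall>x'. step Delta x a x' \<longrightarrow> \<not> can_accept Delta F x')))"

text \<open>Transition t (on letter a) is good at configuration c: Eve wins G1 from (c,c)
  and taking t is a winning move there when Adam picks a, i.e. some winning
  strategy of Eve from (c,c) answers the first letter a with t.\<close>
definition good :: "('q,'a) trans set \<Rightarrow> 'q set \<Rightarrow> 'q conf \<Rightarrow> ('q,'a) trans \<Rightarrow> bool" where
  "good Delta F c t \<longleftrightarrow>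
     (case t of (p,a,d,p') \<Rightarrow> applicable Delta c a t \<and>
        (\<exists>\<tau>. g1_winning Delta F \<tau> (c, c) \<and> \<tau> [] a = t))"

end

theory Submission
  imports Defs
begin

text \<open>Say that e simulates x if Eve wins G1 from (e, x), taking this as the greatest fixed
  point of one round of G1. Every position reached by a winning strategy of G1 is of this form,
  and simulation is transitive.

  If \<sigma> wins the letter game and has reached c after reading w, then \<sigma> replayed after w wins G1
  from (c, c), so its steps are good. Conversely, if \<sigma> takes only good steps, then by induction
  on w Eve's configuration after w simulates every configuration reached by a run over w:
  initially because the net is history-deterministic, and at each step because the target of a
  good a-step from c simulates every a-successor of c, hence by transitivity every a-successor
  of a configuration simulated by c. So Eve accepts whenever some run does, and she can move
  whenever some run can still be extended to an accepting one.\<close>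

section \<open>Runs\<close>

lemma reach_Nil_iff: "reach D c [] c' \<longleftrightarrow> c' = c"
  by (auto intro: reach.intros elim: reach.cases)

lemma reach_Cons_iff:
  "reach D c (a # w) c'' \<longleftrightarrow> (\<exists>c'. step D c a c' \<and> reach D c' w c'')"
  by (blast intro: reach.intros elim: reach.cases)

lemma reach_append:
  "reach D c (u @ v) c'' \<longleftrightarrow> (\<exists>c'. reach D c u c' \<and> reach D c' v c'')"
  by (induction u arbitrary: c) (auto simp: reach_Nil_iff reach_Cons_iff)

lemma reach_snoc:
  "reach D c (u @ [a]) c'' \<longleftrightarrow> (\<exists>c'. reach D c u c' \<and> step D c' a c'')"
  unfolding reach_append by (auto intro: reach.intros elim: reach.cases)

lemma step_target: "applicable D c a t \<Longrightarrow> step D c a (target c t)"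
  unfolding step_def by blast

lemma final_can_accept: "fst c \<in> F \<Longrightarrow> can_accept D F c"
  unfolding can_accept_def by (blast intro: reach.intros)

lemma step_can_accept: "step D c a c' \<Longrightarrow> can_accept D F c' \<Longrightarrow> can_accept D F c"
  unfolding can_accept_def by (blast intro: reach.intros)

lemma extension_in_lang_iff:
  "(\<exists>v. w @ v \<in> lang D q0 F) \<longleftrightarrow> (\<exists>x. reach D (q0, 0) w x \<and> can_accept D F x)"
  unfolding lang_def can_accept_def mem_Collect_eq reach_append by blast

lemma letter_pos_Nil: "letter_pos D q0 \<sigma> [] = Some (q0, 0)"
  by (simp add: letter_pos_def)

lemma letter_pos_snoc:
  "letter_pos D q0 \<sigma> (w @ [a]) = (case letter_pos D q0 \<sigma> w of None \<Rightarrow> None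
     | Some c \<Rightarrow> (if applicable D c a (\<sigma> w a) then Some (target c (\<sigma> w a)) else None))"
  by (simp add: letter_pos_def split: option.split)

lemma letter_pos_snocE:
  assumes "letter_pos D q0 \<sigma> (w @ [a]) = Some c'"
  obtains c where "letter_pos D q0 \<sigma> w = Some c" "applicable D c a (\<sigma> w a)"
    "c' = target c (\<sigma> w a)"
  using assms by (auto simp: letter_pos_snoc split: option.splits if_splits)

lemma letter_pos_reach: "letter_pos D q0 \<sigma> w = Some c \<Longrightarrow> reach D (q0, 0) w c"
proof (induction w arbitrary: c rule: rev_induct)
  case Nil
  then show ?case by (simp add: letter_pos_Nil reach_Nil_iff)
next
  case (snoc a w)
  then obtain c0 where c0: "letter_pos D q0 \<sigma> w = Some c0"
    and ap: "applicable D c0 a (\<sigma> w a)" and c: "c = target c0 (\<sigma> w a)"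
    by (blast elim: letter_pos_snocE)
  have "reach D (q0, 0) w c0" using snoc.IH[OF c0] .
  moreover have "step D c0 a c" using step_target[OF ap] c by simp
  ultimately show ?case unfolding reach_snoc by blast
qed

lemma g1_pos_Nil: "g1_pos D \<tau> s [] = Some s"
  by (simp add: g1_pos_def)

lemma g1_pos_snoc:
  "g1_pos D \<tau> s (h @ [(a, t)]) = (case g1_pos D \<tau> s h of None \<Rightarrow> None
     | Some (e, x) \<Rightarrow> (if applicable D e a (\<tau> h a) \<and> applicable D x a t
           then Some (target e (\<tau> h a), target x t) else None))"
  by (simp add: g1_pos_def split: option.split)

section \<open>Simulation\<close>

definition sim_round :: "('q, 'a) trans set \<Rightarrow> 'q set \<Rightarrow> ('q conf \<Rightarrow> 'q conf \<Rightarrow> bool)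
    \<Rightarrow> 'q conf \<Rightarrow> 'q conf \<Rightarrow> bool" where
  "sim_round D F S e x \<longleftrightarrow>
     (\<forall>a e1. step D e a e1 \<longrightarrow> (\<exists>e'. step D e a e' \<and>
        (\<forall>x'. step D x a x' \<longrightarrow> (fst x' \<in> F \<longrightarrow> fst e' \<in> F) \<and> S e' x'))) \<and>
     (\<forall>a x'. (\<nexists>e'. step D e a e') \<longrightarrow> step D x a x' \<longrightarrow> \<not> can_accept D F x')"

lemma sim_round_mono [mono]:
  "(\<And>e x. S e x \<longrightarrow> S' e x) \<Longrightarrow> sim_round D F S e x \<longrightarrow> sim_round D F S' e x"
  unfolding sim_round_def by blast

coinductive simulates :: "('q, 'a) trans set \<Rightarrow> 'q set \<Rightarrow> 'q conf \<Rightarrow> 'q conf \<Rightarrow> bool"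
  for D F where
  "sim_round D F (simulates D F) e x \<Longrightarrow> simulates D F e x"

lemma simulates_coinduct:
  assumes "S e x" and "\<And>e x. S e x \<Longrightarrow> sim_round D F S e x"
  shows "simulates D F e x"
proof -
  have "sim_round D F (\<lambda>e x. S e x \<or> simulates D F e x) e x" if "S e x" for e x
    by (rule sim_round_mono[rule_format, OF _ assms(2)[OF that]]) simp
  then show ?thesis using assms(1) by (blast intro: simulates.coinduct[of S])
qed

lemma sim_roundI:
  assumes "\<And>a e1. step D e a e1 \<Longrightarrow> \<exists>e'. step D e a e' \<and>
      (\<forall>x'. step D x a x' \<longrightarrow> (fst x' \<in> F \<longrightarrow> fst e' \<in> F) \<and> S e' x')"
    and "\<And>a x'. \<nexists>e'. step D e a e' \<Longrightarrow> step D x a x' \<Longrightarrow> \<not> can_accept D F x'"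
  shows "sim_round D F S e x"
  using assms unfolding sim_round_def by blast

lemma simulates_move:
  assumes "simulates D F e x" and "step D e a e1"
  shows "\<exists>e'. step D e a e' \<and>
    (\<forall>x'. step D x a x' \<longrightarrow> (fst x' \<in> F \<longrightarrow> fst e' \<in> F) \<and> simulates D F e' x')"
  using assms simulates.cases unfolding sim_round_def by blast

lemma simulates_stuck:
  assumes "simulates D F e x" and "\<nexists>e'. step D e a e'" and "step D x a x'"
  shows "\<not> can_accept D F x'"
  using assms simulates.cases unfolding sim_round_def by blast

lemma simulates_can_accept:
  assumes "simulates D F e x" and "fst x \<in> F \<longrightarrow> fst e \<in> F" and "can_accept D F x"
  shows "can_accept D F e"
proof -
  obtain v x'' where "reach D x v x''" "fst x'' \<in> F"
    using assms(3) unfolding can_accept_def by blast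
  then show ?thesis using assms(1,2)
  proof (induction arbitrary: e rule: reach.induct)
    case (reach_Nil x)
    then show ?case by (blast intro: final_can_accept)
  next
    case (reach_Cons x a x' w x'')
    note sim = reach_Cons.prems(2)
    show ?case
    proof (cases "\<exists>e1. step D e a e1")
      case True
      then obtain e1 where "step D e a e1" by blast
      from simulates_move[OF sim this] obtain e' where e': "step D e a e'"
        and "\<forall>x'. step D x a x' \<longrightarrow> (fst x' \<in> F \<longrightarrow> fst e' \<in> F) \<and> simulates D F e' x'"
        by blast
      then have "fst x' \<in> F \<longrightarrow> fst e' \<in> F" and "simulates D F e' x'"
        using reach_Cons.hyps(1) by blast+
      then have "can_accept D F e'"
        using reach_Cons.IH[OF reach_Cons.prems(1)] by blast
      then show ?thesis by (rule step_can_accept[OF e'])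
    next
      case False
      then have "\<not> can_accept D F x'"
        by (rule simulates_stuck[OF sim _ reach_Cons.hyps(1)])
      then show ?thesis
        using reach_Cons.hyps(2) reach_Cons.prems(1) unfolding can_accept_def by blast
    qed
  qed
qed

lemma simulates_compose_move:
  assumes pq: "simulates D F p q" and qr: "simulates D F q r" and "step D p a p1"
  shows "\<exists>p'. step D p a p' \<and> (\<forall>r'. step D r a r' \<longrightarrow> (fst r' \<in> F \<longrightarrow> fst p' \<in> F) \<and>
    ((\<exists>q'. simulates D F p' q' \<and> simulates D F q' r') \<or> \<not> can_accept D F r'))"
proof -
  from simulates_move[OF pq assms(3)] obtain p' where p': "step D p a p'"
    and p'_q': "\<forall>q'. step D q a q' \<longrightarrow> (fst q' \<in> F \<longrightarrow> fst p' \<in> F) \<and> simulates D F p' q'"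
    by blast
  show ?thesis
  proof (cases "\<exists>q1. step D q a q1")
    case True
    then obtain q1 where "step D q a q1" by blast
    from simulates_move[OF qr this] obtain q' where "step D q a q'"
      and "\<forall>r'. step D r a r' \<longrightarrow> (fst r' \<in> F \<longrightarrow> fst q' \<in> F) \<and> simulates D F q' r'"
      by blast
    then show ?thesis using p' p'_q' by blast
  next
    case False
    have "\<not> can_accept D F r'" if "step D r a r'" for r'
      using simulates_stuck[OF qr False that] .
    then show ?thesis using p' final_can_accept by blast
  qed
qed

lemma simulates_compose_stuck:
  assumes pq: "simulates D F p q" and qr: "simulates D F q r"
    and p_stuck: "\<nexists>p'. step D p a p'" and r': "step D r a r'"
  shows "\<not> can_accept D F r'"
proof (cases "\<exists>q1. step D q a q1")
  case True
  then obtain q1 where "step D q a q1" by blast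
  from simulates_move[OF qr this] obtain q' where q': "step D q a q'"
    and "\<forall>r'. step D r a r' \<longrightarrow> (fst r' \<in> F \<longrightarrow> fst q' \<in> F) \<and> simulates D F q' r'"
    by blast
  then have "fst r' \<in> F \<longrightarrow> fst q' \<in> F" and "simulates D F q' r'"
    using r' by blast+
  moreover have "\<not> can_accept D F q'"
    using simulates_stuck[OF pq p_stuck q'] .
  ultimately show ?thesis using simulates_can_accept by blast
next
  case False
  show ?thesis using simulates_stuck[OF qr False r'] .
qed

lemma simulates_trans:
  assumes "simulates D F p q" and "simulates D F q r"
  shows "simulates D F p r"
proof -
  \<comment> \<open>The second disjunct covers the plays in which the middle token gets stuck.\<close>
  define S where "S p r \<longleftrightarrow> (\<exists>q. simulates D F p q \<and> simulates D F q r) \<or> \<not> can_accept D F r"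
    for p r
  have "S p r" using assms unfolding S_def by blast
  then show ?thesis
  proof (rule simulates_coinduct)
    fix p r assume "S p r"
    then consider (dead) "\<not> can_accept D F r"
      | (chain) q where "simulates D F p q" and "simulates D F q r"
      unfolding S_def by blast
    then show "sim_round D F S p r"
    proof cases
      case dead
      have dead': "\<not> can_accept D F r'" if "step D r a r'" for a r'
        using dead step_can_accept[OF that] by blast
      then have "(fst r' \<in> F \<longrightarrow> fst p' \<in> F) \<and> S p' r'" if "step D r a r'" for a r' p'
        using that final_can_accept unfolding S_def by blast
      then show ?thesis using dead' by (blast intro: sim_roundI)
    next
      case chain
      show ?thesis
      proof (rule sim_roundI)
        show "\<exists>p'. step D p a p' \<and> (\<forall>r'. step D r a r' \<longrightarrow> (fst r' \<in> F \<longrightarrow> fst p' \<in> F) \<and> S p' r')"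
          if "step D p a p1" for a p1
          using simulates_compose_move[OF chain that] unfolding S_def .
        show "\<not> can_accept D F r'" if "\<nexists>p'. step D p a p'" and "step D r a r'" for a r'
          using simulates_compose_stuck[OF chain that] .
      qed
    qed
  qed
qed

section \<open>Strategies and simulation\<close>

lemma g1_winningD:
  assumes "g1_winning D F \<tau> s" and "g1_pos D \<tau> s h = Some (e, x)"
  shows g1_winning_move: "step D e a e1 \<Longrightarrow> applicable D e a (\<tau> h a) \<and>
      (\<forall>x'. step D x a x' \<longrightarrow> fst x' \<in> F \<longrightarrow> fst (target e (\<tau> h a)) \<in> F)"
    and g1_winning_stuck: "\<nexists>e'. step D e a e' \<Longrightarrow> step D x a x' \<Longrightarrow> \<not> can_accept D F x'"
proof -
  note round = assms(1)[unfolded g1_winning_def, rule_format, OF assms(2), of a]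
  show "applicable D e a (\<tau> h a) \<and>
      (\<forall>x'. step D x a x' \<longrightarrow> fst x' \<in> F \<longrightarrow> fst (target e (\<tau> h a)) \<in> F)"
    if "step D e a e1"
  proof -
    from that have "\<exists>e'. step D e a e'" by blast
    with round show ?thesis by simp
  qed
  show "\<not> can_accept D F x'" if "\<nexists>e'. step D e a e'" and "step D x a x'"
    using round[unfolded if_not_P[OF that(1)]] that(2) by blast
qed

lemma g1_winning_simulates:
  assumes win: "g1_winning D F \<tau> s" and "g1_pos D \<tau> s h = Some (e, x)"
  shows "simulates D F e x"
proof -
  define S where "S e x \<longleftrightarrow> (\<exists>h. g1_pos D \<tau> s h = Some (e, x))" for e x
  have "S e x" using assms(2) unfolding S_def by blast
  then show ?thesis
  proof (rule simulates_coinduct)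
    fix e x assume "S e x"
    then obtain h where pos: "g1_pos D \<tau> s h = Some (e, x)" unfolding S_def by blast
    show "sim_round D F S e x"
    proof (rule sim_roundI, goal_cases)
      case (1 a e1)
      then have ap: "applicable D e a (\<tau> h a)"
        and acc: "\<forall>x'. step D x a x' \<longrightarrow> fst x' \<in> F \<longrightarrow> fst (target e (\<tau> h a)) \<in> F"
        using g1_winning_move[OF win pos] by blast+
      have "S (target e (\<tau> h a)) x'" if x': "step D x a x'" for x'
      proof -
        obtain t where "applicable D x a t" "x' = target x t"
          using x' unfolding step_def by blast
        then have "g1_pos D \<tau> s (h @ [(a, t)]) = Some (target e (\<tau> h a), x')"
          using pos ap by (simp add: g1_pos_snoc)
        then show ?thesis unfolding S_def by blast
      qed
      then show ?case using step_target[OF ap] acc by blast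
    next
      case (2 a x')
      then show ?case using g1_winning_stuck[OF win pos] by blast
    qed
  qed
qed

text \<open>Adam's token in G1 from (c, c) copies the step to c' by which c answers the step of x; the
  good step then simulates c', and c' simulates x'.\<close>

lemma good_move_simulates:
  assumes good: "good D F c t" and ap: "applicable D c a t"
    and sim: "simulates D F c x" and step: "step D x a x'"
  shows "(fst x' \<in> F \<longrightarrow> fst (target c t) \<in> F) \<and> simulates D F (target c t) x'"
proof -
  obtain \<tau> where win: "g1_winning D F \<tau> (c, c)" and first: "\<tau> [] a = t"
    using good ap by (auto simp: good_def applicable_def split: prod.splits)
  obtain c' where c': "step D c a c'"
    and "\<forall>x'. step D x a x' \<longrightarrow> (fst x' \<in> F \<longrightarrow> fst c' \<in> F) \<and> simulates D F c' x'"
    using simulates_move[OF sim step_target[OF ap]] by blast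
  then have c'_x': "(fst x' \<in> F \<longrightarrow> fst c' \<in> F) \<and> simulates D F c' x'"
    using step by blast
  obtain t' where "applicable D c a t'" "c' = target c t'"
    using c' unfolding step_def by blast
  then have "g1_pos D \<tau> (c, c) [(a, t')] = Some (target c t, c')"
    using ap first g1_pos_snoc[of D \<tau> "(c, c)" "[]" a t'] by (simp add: g1_pos_Nil)
  then have "simulates D F (target c t) c'"
    using g1_winning_simulates[OF win] by blast
  moreover have "fst c' \<in> F \<longrightarrow> fst (target c t) \<in> F"
    using g1_winning_move[OF win g1_pos_Nil c'] c' first by blast
  ultimately show ?thesis using c'_x' simulates_trans by blast
qed

lemma g1_pos_shifted_strategy:
  assumes "letter_pos D q0 \<sigma> w = Some c"
  shows "g1_pos D (\<lambda>h. \<sigma> (w @ map fst h)) (c, c) h = Some (e, x) \<Longrightarrow>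
    letter_pos D q0 \<sigma> (w @ map fst h) = Some e \<and> reach D c (map fst h) x"
proof (induction h arbitrary: e x rule: rev_induct)
  case Nil
  then show ?case using assms by (auto simp: g1_pos_Nil reach_Nil_iff)
next
  case (snoc p h)
  obtain b t where p: "p = (b, t)" by (cases p)
  define u where "u = w @ map fst h"
  from snoc.prems obtain e0 x0 where
    pos: "g1_pos D (\<lambda>h. \<sigma> (w @ map fst h)) (c, c) h = Some (e0, x0)"
    and e: "applicable D e0 b (\<sigma> u b)" "e = target e0 (\<sigma> u b)"
    and x: "applicable D x0 b t" "x = target x0 t"
    unfolding p g1_pos_snoc u_def by (auto split: option.splits if_splits)
  note IH = snoc.IH[OF pos, folded u_def]
  have "letter_pos D q0 \<sigma> (u @ [b]) = Some e"
    using IH e by (simp add: letter_pos_snoc)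
  moreover have "reach D c (map fst h @ [b]) x"
    using IH step_target[OF x(1)] x(2) unfolding reach_snoc by blast
  ultimately show ?case unfolding p u_def by simp
qed

lemma letter_winning_g1_winning:
  assumes win: "letter_winning D q0 F \<sigma>" and pos: "letter_pos D q0 \<sigma> w = Some c"
  shows "g1_winning D F (\<lambda>h. \<sigma> (w @ map fst h)) (c, c)"
  unfolding g1_winning_def
proof (intro allI impI, goal_cases)
  case (1 h b e x)
  define u where "u = w @ map fst h"
  have e: "letter_pos D q0 \<sigma> u = Some e" and "reach D c (map fst h) x"
    using g1_pos_shifted_strategy[OF pos 1] unfolding u_def by auto
  then have "reach D (q0, 0) u x"
    using letter_pos_reach[OF pos] reach_append unfolding u_def by blast
  then have run: "reach D (q0, 0) (u @ [b]) x'" if "step D x b x'" for x'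
    using that unfolding reach_snoc by blast
  note round = win[unfolded letter_winning_def, rule_format, OF e, of b]
  show ?case
  proof (cases "\<exists>e'. step D e b e'")
    case True
    with round run show ?thesis unfolding u_def lang_def by auto
  next
    case False
    with round have "\<not> (\<exists>x'. reach D (q0, 0) (u @ [b]) x' \<and> can_accept D F x')"
      unfolding extension_in_lang_iff by simp
    with False run show ?thesis by auto
  qed
qed

lemma letter_winning_good:
  assumes win: "letter_winning D q0 F \<sigma>"
    and pos: "letter_pos D q0 \<sigma> w = Some c" and "letter_pos D q0 \<sigma> (w @ [a]) = Some c'"
  shows "good D F c (\<sigma> w a)"
proof -
  have "applicable D c a (\<sigma> w a)"
    using assms(2,3) by (auto elim: letter_pos_snocE)
  moreover have "g1_winning D F (\<lambda>h. \<sigma> (w @ map fst h)) (c, c)"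
    using letter_winning_g1_winning[OF win pos] .
  ultimately show ?thesis
    unfolding good_def applicable_def by (auto split: prod.splits)
qed

lemma history_deterministic_simulates_initial:
  assumes "history_deterministic D q0 F"
  shows "simulates D F (q0, 0) (q0, 0)"
proof -
  obtain \<sigma> where "letter_winning D q0 F \<sigma>"
    using assms unfolding history_deterministic_def by blast
  then have "g1_winning D F (\<lambda>h. \<sigma> ([] @ map fst h)) ((q0, 0), (q0, 0))"
    by (rule letter_winning_g1_winning[OF _ letter_pos_Nil])
  then show ?thesis by (rule g1_winning_simulates[OF _ g1_pos_Nil])
qed

definition takes_good_steps :: "('q, 'a) trans set \<Rightarrow> 'q \<Rightarrow> 'q set \<Rightarrow> ('q, 'a) lstrat \<Rightarrow> bool" where
  "takes_good_steps D q0 F \<sigma> \<longleftrightarrow> (\<forall>w a c c'. letter_pos D q0 \<sigma> w = Some c \<longrightarrow>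
     letter_pos D q0 \<sigma> (w @ [a]) = Some c' \<longrightarrow> good D F c (\<sigma> w a))"

lemma letter_winning_takes_good_steps:
  "letter_winning D q0 F \<sigma> \<Longrightarrow> takes_good_steps D q0 F \<sigma>"
  unfolding takes_good_steps_def using letter_winning_good[of D q0 F \<sigma>] by blast

lemma takes_good_steps_simulates:
  assumes hd: "history_deterministic D q0 F" and good: "takes_good_steps D q0 F \<sigma>"
  shows "letter_pos D q0 \<sigma> w = Some c \<Longrightarrow> reach D (q0, 0) w x \<Longrightarrow> simulates D F c x"
proof (induction w arbitrary: c x rule: rev_induct)
  case Nil
  then show ?case
    using history_deterministic_simulates_initial[OF hd] by (simp add: letter_pos_Nil reach_Nil_iff)
next
  case (snoc a w)
  from snoc.prems(1) obtain c0 where c0: "letter_pos D q0 \<sigma> w = Some c0"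
    and ap: "applicable D c0 a (\<sigma> w a)" and c: "c = target c0 (\<sigma> w a)"
    by (rule letter_pos_snocE)
  obtain x0 where x0: "reach D (q0, 0) w x0" and x: "step D x0 a x"
    using snoc.prems(2) unfolding reach_snoc by blast
  have "good D F c0 (\<sigma> w a)"
    using good c0 snoc.prems(1) unfolding takes_good_steps_def by blast
  from good_move_simulates[OF this ap snoc.IH[OF c0 x0] x] show ?case
    unfolding c by blast
qed

lemma takes_good_steps_letter_winning:
  assumes hd: "history_deterministic D q0 F" and strat: "letter_strategy D q0 \<sigma>"
    and good: "takes_good_steps D q0 F \<sigma>"
  shows "letter_winning D q0 F \<sigma>"
  unfolding letter_winning_def
proof (intro allI impI, goal_cases)
  case (1 w a c)
  have sim: "simulates D F c x" if "reach D (q0, 0) w x" for x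
    using takes_good_steps_simulates[OF hd good 1 that] .
  show ?case
  proof (cases "\<exists>c'. step D c a c'")
    case True
    then have ap: "applicable D c a (\<sigma> w a)"
      using strat 1 unfolding letter_strategy_def by blast
    then have "letter_pos D q0 \<sigma> (w @ [a]) = Some (target c (\<sigma> w a))"
      using 1 by (simp add: letter_pos_snoc)
    then have good: "good D F c (\<sigma> w a)"
      using good 1 unfolding takes_good_steps_def by blast
    have "fst (target c (\<sigma> w a)) \<in> F" if accepted: "w @ [a] \<in> lang D q0 F"
    proof -
      obtain x x' where x: "reach D (q0, 0) w x" and x': "step D x a x'" "fst x' \<in> F"
        using accepted unfolding lang_def mem_Collect_eq reach_snoc by blast
      show ?thesis using good_move_simulates[OF good ap sim[OF x] x'(1)] x'(2) by blast
    qed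
    with True ap show ?thesis by simp
  next
    case False
    have "\<not> can_accept D F x'" if run: "reach D (q0, 0) (w @ [a]) x'" for x'
    proof -
      obtain x where x: "reach D (q0, 0) w x" and x': "step D x a x'"
        using run unfolding reach_snoc by blast
      show ?thesis using simulates_stuck[OF sim[OF x] False x'] .
    qed
    then have "\<not> (\<exists>v. (w @ [a]) @ v \<in> lang D q0 F)"
      unfolding extension_in_lang_iff by blast
    with False show ?thesis by simp
  qed
qed

theorem lemma5:
  fixes Delta :: "('q::finite \<times> 'a::finite \<times> int \<times> 'q) set"
    and q0 :: 'q and F :: "'q set" and \<sigma> :: "'a list \<Rightarrow> 'a \<Rightarrow> ('q \<times> 'a \<times> int \<times> 'q)"
  assumes "ocn Delta"
    and "history_deterministic Delta q0 F"
    and "letter_strategy Delta q0 \<sigma>"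
  shows "letter_winning Delta q0 F \<sigma> \<longleftrightarrow>
    (\<forall>w a c c'. letter_pos Delta q0 \<sigma> w = Some c \<longrightarrow>
        letter_pos Delta q0 \<sigma> (w @ [a]) = Some c' \<longrightarrow> good Delta F c (\<sigma> w a))"
proof -
  have "letter_winning Delta q0 F \<sigma> \<longleftrightarrow> takes_good_steps Delta q0 F \<sigma>"
    using letter_winning_takes_good_steps takes_good_steps_letter_winning[OF assms(2,3)]
    by (rule iffI)
  then show ?thesis unfolding takes_good_steps_def .
qed

end
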